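(* Consider the bounded-reward setting (all rewards in $[0,1]$, all mean rewards $\mu(s,a)\in(0,1]$). Then: (1) There exist a finite episodic MDP $(\mathcal S,\mathcal A,H,\mathbb P,\mu)$ and a target policy $\pi^+$ such that no reward manipulation attack satisfying the constraint below achieves the attack objective. Here a reward manipulation attack (in expectation) is specified by values $\tilde\mu_h(s,a)$ for all $h\le H$, $s\in\mathcal S$, $a\in\mathcal A$ such that $\tilde\mu_h(s,\pi^+_h(s))=\mu(s,\pi^+_h(s))$ and $\tilde\mu_h(s,a)\in[0,1]$ for $a\neq\pi^+_h(s)$; actions and transitions are not modified; the manipulated values $\tilde V^\pi_h$ are the values of policies in the MDP with transitions $\mathbb P$ and step-$h$ mean rewards $\tilde\mu_h$. (2) There exist a finite episodic MDP and a target policy $\pi^+$ such that no action manipulation attack satisfying the constraint below achieves the attack objective. Here an action manipulation attack is specified by (possibly randomized) maps assigning to each $h\le H$, $s\in\mathcal S$, $a\in\mathcal A$ an executed action $a^o\in\mathcal A$, with $a^o=a$ whenever $a=\pi^+_h(s)$; rewards are not contaminated; when the learner plays $a$ in state $s$ at step $h$, the environment produces mean reward $\mu(s,a^o)$ and next state $s'\sim\mathbb P(\cdot\mid s,a^o)$; the manipulated values $\tilde V^\pi_h$ are the values of policies in this induced environment.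
   Context: An episodic MDP $(\mathcal S,\mathcal A,H,\mathbb P,\mu)$ has finite state set $\mathcal S$, finite action set $\mathcal A$, horizon $H$ (steps per episode), stationary transition kernel $\mathbb P(\cdot\mid s,a)$ and mean reward $\mu(s,a)$. A deterministic policy $\pi=(\pi_1,\dots,\pi_H)$ consists of maps $\pi_h:\mathcal S\to\mathcal A$. The value $V^\pi_h(s)=\mathbb E[\sum_{h'=h}^H \mu(s_{h'},\pi_{h'}(s_{h'}))\mid s_h=s]$, and $\tilde V^\pi_h(s)$ denotes the analogous expected cumulative reward from step $h$ in state $s$ computed in the environment as perceived by the learner under the attack (manipulated rewards and/or manipulated dynamics). The attack objective for a target policy $\pi^+$ is: for all $h\le H$, all $s\in\mathcal S$ and every deterministic policy $\pi$ with $\pi_h(s)\neq\pi^+_h(s)$, one has $\tilde V^\pi_h(s)<\tilde V^{\pi^+}_h(s)$. *)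

theory Defs
  imports Complex_Main
begin

text \<open>Steps are h = 1..H.
  A (possibly step-dependent) environment is given by mean rewards r h s a and
  transition probabilities Q h s a s'.\<close>

fun valk :: "nat set \<Rightarrow> (nat \<Rightarrow> nat \<Rightarrow> nat \<Rightarrow> real) \<Rightarrow> (nat \<Rightarrow> nat \<Rightarrow> nat \<Rightarrow> nat \<Rightarrow> real)
             \<Rightarrow> (nat \<Rightarrow> nat \<Rightarrow> nat) \<Rightarrow> nat \<Rightarrow> nat \<Rightarrow> nat \<Rightarrow> real" where
  "valk S r Q pol h 0 s = 0"
| "valk S r Q pol h (Suc k) s =
     r h s (pol h s) + (\<Sum>s'\<in>S. Q h s (pol h s) s' * valk S r Q pol (Suc h) k s')"

definition value_fn :: "nat set \<Rightarrow> nat \<Rightarrow> (nat \<Rightarrow> nat \<Rightarrow> nat \<Rightarrow> real) \<Rightarrow> (nat \<Rightarrow> nat \<Rightarrow> nat \<Rightarrow> nat \<Rightarrow> real)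
             \<Rightarrow> (nat \<Rightarrow> nat \<Rightarrow> nat) \<Rightarrow> nat \<Rightarrow> nat \<Rightarrow> real" where
  "value_fn S H r Q pol h s = valk S r Q pol h (Suc H - h) s"

definition is_mdp :: "nat set \<Rightarrow> nat set \<Rightarrow> nat \<Rightarrow> (nat \<Rightarrow> nat \<Rightarrow> nat \<Rightarrow> real) \<Rightarrow> (nat \<Rightarrow> nat \<Rightarrow> real) \<Rightarrow> bool" where
  "is_mdp S A H P mu \<longleftrightarrow> finite S \<and> S \<noteq> {} \<and> finite A \<and> A \<noteq> {} \<and> H \<ge> 1 \<and>
     (\<forall>s\<in>S. \<forall>a\<in>A. (\<forall>s'\<in>S. P s a s' \<ge> 0) \<and> (\<Sum>s'\<in>S. P s a s') = 1) \<and>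
     (\<forall>s\<in>S. \<forall>a\<in>A. 0 < mu s a \<and> mu s a \<le> 1)"

definition is_policy :: "nat set \<Rightarrow> nat set \<Rightarrow> nat \<Rightarrow> (nat \<Rightarrow> nat \<Rightarrow> nat) \<Rightarrow> bool" where
  "is_policy S A H pol \<longleftrightarrow> (\<forall>h\<in>{1..H}. \<forall>s\<in>S. pol h s \<in> A)"

definition attack_objective :: "nat set \<Rightarrow> nat set \<Rightarrow> nat \<Rightarrow> (nat \<Rightarrow> nat \<Rightarrow> nat \<Rightarrow> real)
     \<Rightarrow> (nat \<Rightarrow> nat \<Rightarrow> nat \<Rightarrow> nat \<Rightarrow> real) \<Rightarrow> (nat \<Rightarrow> nat \<Rightarrow> nat) \<Rightarrow> bool" where
  "attack_objective S A H r Q piplus \<longleftrightarrow>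
     (\<forall>h\<in>{1..H}. \<forall>s\<in>S. \<forall>pol. is_policy S A H pol \<longrightarrow> pol h s \<noteq> piplus h s \<longrightarrow>
        value_fn S H r Q pol h s < value_fn S H r Q piplus h s)"

definition reward_attack_ok :: "nat set \<Rightarrow> nat set \<Rightarrow> nat \<Rightarrow> (nat \<Rightarrow> nat \<Rightarrow> real)
     \<Rightarrow> (nat \<Rightarrow> nat \<Rightarrow> nat) \<Rightarrow> (nat \<Rightarrow> nat \<Rightarrow> nat \<Rightarrow> real) \<Rightarrow> bool" where
  "reward_attack_ok S A H mu piplus mut \<longleftrightarrow>
     (\<forall>h\<in>{1..H}. \<forall>s\<in>S. \<forall>a\<in>A.
        (a = piplus h s \<longrightarrow> mut h s a = mu s a) \<and>
        (a \<noteq> piplus h s \<longrightarrow> 0 \<le> mut h s a \<and> mut h s a \<le> 1))"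

text \<open>Action manipulation attack: q h s a a' is the probability that action a' is
  executed when the learner plays a in state s at step h.\<close>
definition action_attack_ok :: "nat set \<Rightarrow> nat set \<Rightarrow> nat \<Rightarrow> (nat \<Rightarrow> nat \<Rightarrow> nat)
     \<Rightarrow> (nat \<Rightarrow> nat \<Rightarrow> nat \<Rightarrow> nat \<Rightarrow> real) \<Rightarrow> bool" where
  "action_attack_ok S A H piplus q \<longleftrightarrow>
     (\<forall>h\<in>{1..H}. \<forall>s\<in>S. \<forall>a\<in>A.
        (\<forall>a'\<in>A. q h s a a' \<ge> 0) \<and> (\<Sum>a'\<in>A. q h s a a') = 1 \<and>
        (a = piplus h s \<longrightarrow> (\<forall>a'\<in>A. q h s a a' = (if a' = a then 1 else 0))))"

definition action_induced_reward :: "nat set \<Rightarrow> (nat \<Rightarrow> nat \<Rightarrow> real) \<Rightarrow> (nat \<Rightarrow> nat \<Rightarrow> nat \<Rightarrow> nat \<Rightarrow> real)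
     \<Rightarrow> nat \<Rightarrow> nat \<Rightarrow> nat \<Rightarrow> real" where
  "action_induced_reward A mu q h s a = (\<Sum>a'\<in>A. q h s a a' * mu s a')"

definition action_induced_trans :: "nat set \<Rightarrow> (nat \<Rightarrow> nat \<Rightarrow> nat \<Rightarrow> real) \<Rightarrow> (nat \<Rightarrow> nat \<Rightarrow> nat \<Rightarrow> nat \<Rightarrow> real)
     \<Rightarrow> nat \<Rightarrow> nat \<Rightarrow> nat \<Rightarrow> nat \<Rightarrow> real" where
  "action_induced_trans A P q h s a s' = (\<Sum>a'\<in>A. q h s a a' * P s a' s')"

end

theory Submission
  imports Defs
begin

text \<open>Neither attack can change the value of the target policy: a reward attack must keep
  the rewards of target actions, and an action attack must execute target actions faithfully.
  So it suffices to find an MDP in which some deviation from the target policy is worth at least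
  as much as the target policy under every admissible attack. For reward attacks, let the target
  action in the initial state keep the agent in a poor state while the alternative moves it to a
  good state whose (untouchable) target reward already exceeds the target's total value. For action
  attacks, let the target action be the worst action of a one-step MDP: any randomisation of the
  executed action then yields at least the target's reward.\<close>

lemma sum_point_mass:
  fixes f :: "'a \<Rightarrow> 'b::semiring_1"
  assumes "finite A" "a \<in> A" "\<forall>a'\<in>A. q a' = (if a' = a then 1 else 0)"
  shows "(\<Sum>a'\<in>A. q a' * f a') = f a"
proof -
  have "(\<Sum>a'\<in>A. q a' * f a') = (\<Sum>a'\<in>A. if a' = a then f a' else 0)"
    using assms(3) by (intro sum.cong) auto
  with assms(1,2) show ?thesis by simp
qed

lemma valk_cong:
  assumes "\<forall>j\<in>{h..<h+k}. \<forall>s\<in>S. r j s (pol j s) = r' j s (pol j s) \<and>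
             (\<forall>s'\<in>S. Q j s (pol j s) s' = Q' j s (pol j s) s')"
    and "s \<in> S"
  shows "valk S r Q pol h k s = valk S r' Q' pol h k s"
  using assms
proof (induction k arbitrary: h s)
  case 0
  show ?case by simp
next
  case (Suc k)
  have step: "r h s (pol h s) = r' h s (pol h s)"
    "\<forall>s'\<in>S. Q h s (pol h s) s' = Q' h s (pol h s) s'"
    using Suc.prems by auto
  have "valk S r Q pol (Suc h) k s' = valk S r' Q' pol (Suc h) k s'" if "s' \<in> S" for s'
    using Suc.IH[of "Suc h" s'] Suc.prems(1) that by auto
  with step show ?case by simp
qed

lemma value_fn_cong:
  assumes "\<forall>j\<in>{1..H}. \<forall>s\<in>S. r j s (pol j s) = r' j s (pol j s) \<and>
             (\<forall>s'\<in>S. Q j s (pol j s) s' = Q' j s (pol j s) s')"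
    and "1 \<le> h" and "s \<in> S"
  shows "value_fn S H r Q pol h s = value_fn S H r' Q' pol h s"
  unfolding value_fn_def
  by (rule valk_cong) (use assms in auto)

lemma value_fn_last: "value_fn S H r Q pol H s = r H s (pol H s)"
  by (simp add: value_fn_def)

lemma value_fn_Bellman:
  assumes "h \<le> H"
  shows "value_fn S H r Q pol h s =
           r h s (pol h s) + (\<Sum>s'\<in>S. Q h s (pol h s) s' * value_fn S H r Q pol (Suc h) s')"
  using assms by (simp add: value_fn_def Suc_diff_le)

lemma reward_attack_target_value:
  assumes "reward_attack_ok S A H mu piplus mut" and "is_policy S A H piplus"
    and "1 \<le> h" and "s \<in> S"
  shows "value_fn S H mut Q piplus h s = value_fn S H (\<lambda>h. mu) Q piplus h s"
proof (rule value_fn_cong[OF _ assms(3,4)], intro ballI conjI)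
  fix j s assume "j \<in> {1..H}" "s \<in> S"
  with assms(1,2) show "mut j s (piplus j s) = mu s (piplus j s)"
    unfolding reward_attack_ok_def is_policy_def by blast
qed simp

lemma action_attack_target_value:
  assumes "action_attack_ok S A H piplus q" and "is_policy S A H piplus" and "finite A"
    and "1 \<le> h" and "s \<in> S"
  shows "value_fn S H (action_induced_reward A mu q) (action_induced_trans A P q) piplus h s
       = value_fn S H (\<lambda>h. mu) (\<lambda>h. P) piplus h s"
proof (rule value_fn_cong[OF _ assms(4,5)], intro ballI conjI)
  fix j s assume "j \<in> {1..H}" "s \<in> S"
  with assms(2) have target: "piplus j s \<in> A" unfolding is_policy_def by blast
  with assms(1) \<open>j \<in> {1..H}\<close> \<open>s \<in> S\<close>
  have faithful: "\<forall>a'\<in>A. q j s (piplus j s) a' = (if a' = piplus j s then 1 else 0)"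
    unfolding action_attack_ok_def by blast
  show "action_induced_reward A mu q j s (piplus j s) = mu s (piplus j s)"
    by (simp add: action_induced_reward_def sum_point_mass[OF \<open>finite A\<close> target faithful])
  show "action_induced_trans A P q j s (piplus j s) s' = P s (piplus j s) s'" for s'
    by (simp add: action_induced_trans_def sum_point_mass[OF \<open>finite A\<close> target faithful])
qed

lemma action_induced_reward_ge:
  assumes "action_attack_ok S A H piplus q" and "h \<in> {1..H}" "s \<in> S" "a \<in> A"
    and "\<forall>a'\<in>A. c \<le> mu s a'"
  shows "c \<le> action_induced_reward A mu q h s a"
proof -
  have q_distr: "\<forall>a'\<in>A. 0 \<le> q h s a a'" "(\<Sum>a'\<in>A. q h s a a') = 1"
    using assms(1-4) unfolding action_attack_ok_def by auto
  have "c = (\<Sum>a'\<in>A. q h s a a' * c)"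
    using q_distr(2) by (simp add: sum_distrib_right[symmetric])
  also have "\<dots> \<le> (\<Sum>a'\<in>A. q h s a a' * mu s a')"
    using q_distr(1) assms(5) by (intro sum_mono mult_left_mono) auto
  finally show ?thesis by (simp add: action_induced_reward_def)
qed

lemma reward_attack_can_fail:
  "\<exists>S A H P mu piplus. is_mdp S A H P mu \<and> is_policy S A H piplus \<and>
     \<not> (\<exists>mut. reward_attack_ok S A H mu piplus mut \<and>
          attack_objective S A H mut (\<lambda>h s a s'. P s a s') piplus)"
proof -
  define next_state :: "nat \<Rightarrow> nat \<Rightarrow> nat" where
    "next_state s a = (if s = 0 \<and> a = 0 then 0 else 1)" for s a
  define P :: "nat \<Rightarrow> nat \<Rightarrow> nat \<Rightarrow> real" where
    "P s a s' = of_bool (s' = next_state s a)" for s a s'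
  define mu :: "nat \<Rightarrow> nat \<Rightarrow> real" where "mu s a = (if s = 0 \<and> a = 0 then 1/4 else 1)" for s a
  define piplus :: "nat \<Rightarrow> nat \<Rightarrow> nat" where "piplus h s = 0" for h s
  define S :: "nat set" where "S = {0, 1}"
  let ?Q = "\<lambda>h s a s'. P s a s'"
  have mdp: "is_mdp S S 2 P mu"
    unfolding is_mdp_def P_def mu_def next_state_def S_def by auto
  have target: "is_policy S S 2 piplus" unfolding is_policy_def piplus_def S_def by auto
  have two_step: "value_fn S 2 r ?Q pol 1 0 = r 1 0 (pol 1 0) + r 2 s' (pol 2 s')"
    if "s' = next_state 0 (pol 1 0)" for r pol s'
  proof -
    have "value_fn S 2 r ?Q pol 1 0
        = r 1 0 (pol 1 0) + (\<Sum>t\<in>S. P 0 (pol 1 0) t * value_fn S 2 r ?Q pol (Suc 1) t)"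
      by (rule value_fn_Bellman) simp
    also have "\<dots> = r 1 0 (pol 1 0) + (\<Sum>t\<in>S. P 0 (pol 1 0) t * r 2 t (pol 2 t))"
      by (simp only: Suc_1 value_fn_last)
    also have "\<dots> = r 1 0 (pol 1 0) + r 2 s' (pol 2 s')"
      using that by (subst sum_point_mass[of S s']) (auto simp: S_def P_def next_state_def)
    finally show ?thesis .
  qed
  have "\<not> attack_objective S S 2 mut ?Q piplus" if ok: "reward_attack_ok S S 2 mu piplus mut" for mut
  proof
    assume objective: "attack_objective S S 2 mut ?Q piplus"
    define deviation :: "nat \<Rightarrow> nat \<Rightarrow> nat" where "deviation h s = (if h = 1 then 1 else 0)" for h s
    have "is_policy S S 2 deviation" unfolding is_policy_def deviation_def S_def by auto
    with objective have "value_fn S 2 mut ?Q deviation 1 0 < value_fn S 2 mut ?Q piplus 1 0"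
      unfolding attack_objective_def by (auto simp: deviation_def piplus_def S_def)
    moreover have "value_fn S 2 mut ?Q piplus 1 0 = value_fn S 2 (\<lambda>h. mu) ?Q piplus 1 0"
      by (rule reward_attack_target_value[OF ok target]) (simp_all add: S_def)
    also have "\<dots> = 1/2"
      by (subst two_step[of 0]) (simp_all add: piplus_def next_state_def mu_def)
    moreover have "value_fn S 2 mut ?Q deviation 1 0 = mut 1 0 1 + mut 2 1 0"
      by (subst two_step[of 1]) (simp_all add: deviation_def next_state_def)
    moreover have "mut 1 0 1 \<ge> 0" "mut 2 1 0 = 1"
      using ok by (auto simp: reward_attack_ok_def piplus_def mu_def S_def)
    ultimately show False by simp
  qed
  with mdp target show ?thesis by blast
qed

lemma action_attack_can_fail:
  "\<exists>S A H P mu piplus. is_mdp S A H P mu \<and> is_policy S A H piplus \<and>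
     \<not> (\<exists>q. action_attack_ok S A H piplus q \<and>
          attack_objective S A H (action_induced_reward A mu q) (action_induced_trans A P q) piplus)"
proof -
  define P :: "nat \<Rightarrow> nat \<Rightarrow> nat \<Rightarrow> real" where "P s a s' = 1" for s a s'
  define mu :: "nat \<Rightarrow> nat \<Rightarrow> real" where "mu s a = (if a = 0 then 1/2 else 1)" for s a
  define piplus :: "nat \<Rightarrow> nat \<Rightarrow> nat" where "piplus h s = 0" for h s
  define A :: "nat set" where "A = {0, 1}"
  have mdp: "is_mdp {0} A 1 P mu" unfolding is_mdp_def P_def mu_def A_def by auto
  have target: "is_policy {0} A 1 piplus" unfolding is_policy_def piplus_def A_def by auto
  have "\<not> attack_objective {0} A 1 (action_induced_reward A mu q) (action_induced_trans A P q) piplus"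
    if ok: "action_attack_ok {0} A 1 piplus q" for q
  proof
    let ?r = "action_induced_reward A mu q" and ?Q = "action_induced_trans A P q"
    assume objective: "attack_objective {0} A 1 ?r ?Q piplus"
    define deviation :: "nat \<Rightarrow> nat \<Rightarrow> nat" where "deviation h s = 1" for h s
    have "is_policy {0} A 1 deviation" unfolding is_policy_def deviation_def A_def by auto
    with objective have "value_fn {0} 1 ?r ?Q deviation 1 0 < value_fn {0} 1 ?r ?Q piplus 1 0"
      unfolding attack_objective_def by (auto simp: deviation_def piplus_def)
    moreover have "value_fn {0} 1 ?r ?Q piplus 1 0 = 1/2"
      using action_attack_target_value[OF ok target, of 1 0]
      by (simp add: A_def value_fn_last piplus_def mu_def)
    moreover have "1/2 \<le> value_fn {0} 1 ?r ?Q deviation 1 0"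
      unfolding value_fn_last
      by (rule action_induced_reward_ge[OF ok]) (auto simp: A_def deviation_def mu_def)
    ultimately show False by simp
  qed
  with mdp target show ?thesis by blast
qed

theorem theorem1:
  shows "(\<exists>S A H P mu piplus. is_mdp S A H P mu \<and> is_policy S A H piplus \<and>
            \<not> (\<exists>mut. reward_attack_ok S A H mu piplus mut \<and>
                 attack_objective S A H mut (\<lambda>h s a s'. P s a s') piplus))
       \<and> (\<exists>S A H P mu piplus. is_mdp S A H P mu \<and> is_policy S A H piplus \<and>
            \<not> (\<exists>q. action_attack_ok S A H piplus q \<and>
                 attack_objective S A H (action_induced_reward A mu q)
                                        (action_induced_trans A P q) piplus))"
  using reward_attack_can_fail action_attack_can_fail by blast

end
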